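(* For $m\ge2$ let $\beta(m)=\inf\{t>0:Z_{m-1}(t)\ge\frac{1}{2e}\}$ for the frozen boundaries process $\mathbf{Z}_m$. There exists $c\in(0,\infty)$ such that for all $m>1$, $\mathbb{E}^*\beta(m)\le cm^2$.
   Context: Frozen boundaries process: for $m\ge2$, $\mathbf{Z}_m=(Z_1,\dots,Z_m)$ is an $m$-particle pure jump Markov process on $\mathbb{R}$ with $Z_1(t)=1$ and $Z_m(t)=0$ for all $t\ge0$, $Z_i(0)=0$ for $i\in\{2,\dots,m\}$, and $Z_1(t)\ge Z_2(t)\ge\dots\ge Z_m(t)$. For each $i\in\{2,\dots,m-1\}$, particle $Z_i$ jumps at rate $Z_{i-1}(t)-Z_i(t)$ to a location chosen uniformly in $(Z_i(t),Z_{i-1}(t))$ (so it cannot move while $Z_i=Z_{i-1}$). $\mathbb{P}^*,\mathbb{E}^*$ denote its law and expectation. *)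

theory Defs
  imports "HOL-Probability.Probability"
begin

text \<open>Frozen boundaries process Z_m, constructed pathwise (standard Gillespie /
 superposition construction) from an i.i.d. sequence of pairs (U_k, E_k),
 U_k uniform on (0,1), E_k exponential with rate 1, all independent.
 Configurations are functions nat => real; only indices 1..m are meaningful.\<close>

definition fb_init :: "nat \<Rightarrow> nat \<Rightarrow> real" where
  "fb_init m i = (if i = 1 then 1 else 0)"

definition fb_rate :: "nat \<Rightarrow> (nat \<Rightarrow> real) \<Rightarrow> real" where
  "fb_rate m z = (\<Sum>i\<in>{2..m-1}. z (i - 1) - z i)"

text \<open>One jump driven by U in (0,1): the point u is uniform on (z(m-1), z(1)), which is the
 disjoint union of the intervals (z i, z(i-1)), i = 2..m-1; choosing u this way selects
 particle i with probability proportional to its rate z(i-1) - z(i), and moves it to a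
 uniform location in (z i, z(i-1)).\<close>
definition fb_jump :: "nat \<Rightarrow> (nat \<Rightarrow> real) \<Rightarrow> real \<Rightarrow> nat \<Rightarrow> real" where
  "fb_jump m z U = (let u = z (m - 1) + U * fb_rate m z in
     (\<lambda>i. if 2 \<le> i \<and> i \<le> m - 1 \<and> z i < u \<and> u < z (i - 1) then u else z i))"

fun fb_chain :: "nat \<Rightarrow> (nat \<Rightarrow> real \<times> real) \<Rightarrow> nat \<Rightarrow> nat \<Rightarrow> real" where
  "fb_chain m \<omega> 0 = fb_init m"
| "fb_chain m \<omega> (Suc k) = fb_jump m (fb_chain m \<omega> k) (fst (\<omega> k))"

text \<open>Holding time in the k-th state: Exp(rate) = E_k / rate (infinite if rate is 0).\<close>
definition fb_hold :: "nat \<Rightarrow> (nat \<Rightarrow> real \<times> real) \<Rightarrow> nat \<Rightarrow> ennreal" where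
  "fb_hold m \<omega> k = (let r = fb_rate m (fb_chain m \<omega> k) in
     if 0 < r then ennreal (snd (\<omega> k) / r) else \<infinity>)"

definition fb_jumptime :: "nat \<Rightarrow> (nat \<Rightarrow> real \<times> real) \<Rightarrow> nat \<Rightarrow> ennreal" where
  "fb_jumptime m \<omega> k = (\<Sum>j<k. fb_hold m \<omega> j)"

definition fb_Z :: "nat \<Rightarrow> (nat \<Rightarrow> real \<times> real) \<Rightarrow> real \<Rightarrow> nat \<Rightarrow> real" where
  "fb_Z m \<omega> t = fb_chain m \<omega> (card {k. 1 \<le> k \<and> fb_jumptime m \<omega> k \<le> ennreal t})"

definition fb_space :: "(nat \<Rightarrow> real \<times> real) measure" where
  "fb_space = PiM UNIV (\<lambda>_::nat.
      uniform_measure lborel {0<..<(1::real)} \<Otimes>\<^sub>M density lborel (exponential_density 1))"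

text \<open>beta(m) = inf{t > 0 : Z_{m-1}(t) >= 1/(2e)} (value infinity if the set is empty).\<close>
definition fb_beta :: "nat \<Rightarrow> (nat \<Rightarrow> real \<times> real) \<Rightarrow> ennreal" where
  "fb_beta m \<omega> = Inf {ennreal t | t. 0 < t \<and> 1 / (2 * exp 1) \<le> fb_Z m \<omega> t (m - 1)}"

end

theory Submission
  imports Defs
begin

(*
  While Z_(m-1) < 1/(2e), the total jump rate 1 - Z_(m-1) exceeds 1/2, so the k-th holding time
  E_k / rate is at most 2 (1 + E_k).  Hence beta(m) is at most one plus twice the sum of 1 + E_k
  over the jumps made before Z_(m-1) first reaches the level.

  This cost is controlled by the mass Z_2 + ... + Z_(m-1) <= m - 2 of the inner particles.  At a
  jump the target point is uniform on (Z_(m-1), 1), an interval of length L > 1/2 cut into the gaps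
  g_i = Z_(i-1) - Z_i.  Landing in the upper half of gap i has probability g_i / (2 L) and raises the
  mass by at least g_i / 2, so the expected gain is at least (sum g_i^2) / (4 L) >= L / (4 (m - 2))
  by Cauchy-Schwarz.  Scaled by 16 (m - 2), the mass therefore gains at least 2 = E (1 + E_k) per
  step, and optional stopping bounds the expected cost by 16 (m - 2)^2.
*)

lemma nn_integral_PiM_case_nat:
  assumes M: "prob_space M" and f[measurable]: "f \<in> borel_measurable (PiM UNIV (\<lambda>_::nat. M))"
  shows "(\<integral>\<^sup>+\<omega>. f \<omega> \<partial>PiM UNIV (\<lambda>_. M)) =
    (\<integral>\<^sup>+x. (\<integral>\<^sup>+\<omega>. f (case_nat x \<omega>) \<partial>PiM UNIV (\<lambda>_. M)) \<partial>M)"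
proof -
  interpret prob_space M by (fact M)
  interpret sequence_space M by unfold_locales
  have [measurable]: "(\<lambda>(x, \<omega>). case_nat x \<omega>) \<in> measurable (M \<Otimes>\<^sub>M S) S" by measurable
  have "(\<integral>\<^sup>+\<omega>. f \<omega> \<partial>S) = (\<integral>\<^sup>+\<omega>. f \<omega> \<partial>distr (M \<Otimes>\<^sub>M S) S (\<lambda>(x, \<omega>). case_nat x \<omega>))"
    by (simp add: PiM_iter)
  also have "\<dots> = (\<integral>\<^sup>+y. f (case_prod case_nat y) \<partial>(M \<Otimes>\<^sub>M S))"
    by (simp add: nn_integral_distr)
  also have "\<dots> = (\<integral>\<^sup>+x. (\<integral>\<^sup>+\<omega>. f (case_nat x \<omega>) \<partial>S) \<partial>M)"
    by (subst sigma_finite_measure.nn_integral_fst[symmetric])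
      (auto intro: prob_space_imp_sigma_finite prob_space_PiM M)
  finally show ?thesis .
qed

lemma borel_measurable_nn_integral_PiM_case_nat:
  assumes M: "prob_space M" and f[measurable]: "f \<in> borel_measurable (PiM UNIV (\<lambda>_::nat. M))"
  shows "(\<lambda>x. \<integral>\<^sup>+\<omega>. f (case_nat x \<omega>) \<partial>PiM UNIV (\<lambda>_. M)) \<in> borel_measurable M"
proof -
  have "(\<lambda>(x, \<omega>). f (case_nat x \<omega>)) \<in> borel_measurable (M \<Otimes>\<^sub>M PiM UNIV (\<lambda>_. M))"
    by measurable
  then show ?thesis
    by (intro sigma_finite_measure.borel_measurable_nn_integral)
      (auto intro: prob_space_imp_sigma_finite prob_space_PiM M simp: case_prod_unfold)
qed

section \<open>Expected cost of a randomly driven chain before it stops\<close>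

fun trajectory :: "('s \<Rightarrow> 'b \<Rightarrow> 's) \<Rightarrow> 's \<Rightarrow> (nat \<Rightarrow> 'b) \<Rightarrow> nat \<Rightarrow> 's" where
  "trajectory step s \<omega> 0 = s"
| "trajectory step s \<omega> (Suc k) = step (trajectory step s \<omega> k) (\<omega> k)"

lemma trajectory_case_nat_Suc:
  "trajectory step s (case_nat x \<omega>) (Suc k) = trajectory step (step s x) \<omega> k"
  by (induct k) auto

definition stopped_cost ::
    "('s \<Rightarrow> 'b \<Rightarrow> 's) \<Rightarrow> ('s \<Rightarrow> bool) \<Rightarrow> ('s \<Rightarrow> 'b \<Rightarrow> ennreal) \<Rightarrow> 's \<Rightarrow> (nat \<Rightarrow> 'b) \<Rightarrow> nat \<Rightarrow> ennreal"
  where "stopped_cost step alive cost s \<omega> j =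
    (if \<forall>i\<le>j. alive (trajectory step s \<omega> i) then cost (trajectory step s \<omega> j) (\<omega> j) else 0)"

lemma stopped_cost_case_nat_0:
  "stopped_cost step alive cost s (case_nat x \<omega>) 0 = (if alive s then cost s x else 0)"
  by (simp add: stopped_cost_def)

lemma stopped_cost_case_nat_Suc:
  "stopped_cost step alive cost s (case_nat x \<omega>) (Suc j) =
    (if alive s then stopped_cost step alive cost (step s x) \<omega> j else 0)"
proof -
  have "(\<forall>i\<le>Suc j. Q i) \<longleftrightarrow> Q 0 \<and> (\<forall>i\<le>j. Q (Suc i))" for Q :: "nat \<Rightarrow> bool"
    by (simp only: less_Suc_eq_le[symmetric] All_less_Suc2)
  from this[of "\<lambda>i. alive (trajectory step s (case_nat x \<omega>) i)"] show ?thesis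
    unfolding stopped_cost_def
    by (auto simp add: trajectory_case_nat_Suc simp del: trajectory.simps(2))
qed

lemma stopped_cost_not_alive: "\<not> alive s \<Longrightarrow> stopped_cost step alive cost s \<omega> j = 0"
  unfolding stopped_cost_def by (metis le0 trajectory.simps(1))

lemma sum_stopped_cost_case_nat:
  "alive s \<Longrightarrow> (\<Sum>j<Suc n. stopped_cost step alive cost s (case_nat x \<omega>) j) =
    cost s x + (\<Sum>j<n. stopped_cost step alive cost (step s x) \<omega> j)"
  unfolding sum.lessThan_Suc_shift stopped_cost_case_nat_0 stopped_cost_case_nat_Suc by simp

text \<open>If, while alive, the expected cost of a step is paid for by the expected increase of a
  bounded potential, the expected total cost before the chain first leaves the alive states is at
  most the bound.\<close>

locale potential_drift = prob_space M
  for M :: "'b measure"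
  and step :: "'s \<Rightarrow> 'b \<Rightarrow> 's" and S :: "'s set" and alive :: "'s \<Rightarrow> bool"
  and cost :: "'s \<Rightarrow> 'b \<Rightarrow> ennreal" and V :: "'s \<Rightarrow> ennreal" and B :: ennreal +
  assumes step_closed: "\<And>s x. s \<in> S \<Longrightarrow> x \<in> space M \<Longrightarrow> step s x \<in> S"
    and potential_le: "\<And>s. s \<in> S \<Longrightarrow> V s \<le> B"
    and drift: "\<And>s. s \<in> S \<Longrightarrow> alive s \<Longrightarrow> (\<integral>\<^sup>+x. cost s x \<partial>M) + V s \<le> (\<integral>\<^sup>+x. V (step s x) \<partial>M)"
    and measurable_cost: "\<And>s. s \<in> S \<Longrightarrow> cost s \<in> borel_measurable M"
    and measurable_potential_step: "\<And>s. s \<in> S \<Longrightarrow> (\<lambda>x. V (step s x)) \<in> borel_measurable M"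
    and measurable_stopped_cost: "\<And>s j. s \<in> S \<Longrightarrow>
      (\<lambda>\<omega>. stopped_cost step alive cost s \<omega> j) \<in> borel_measurable (PiM UNIV (\<lambda>_. M))"
begin

abbreviation "P \<equiv> PiM UNIV (\<lambda>_::nat. M)"

abbreviation "partial_cost s \<omega> n \<equiv> \<Sum>j<n. stopped_cost step alive cost s \<omega> j"

lemma prob_space_P: "prob_space P"
  by (intro prob_space_PiM prob_space_axioms)

lemma measurable_partial_cost[measurable]:
  "s \<in> S \<Longrightarrow> (\<lambda>\<omega>. partial_cost s \<omega> n) \<in> borel_measurable P"
  using measurable_stopped_cost by measurable

lemma measurable_nn_integral_partial_cost_step:
  assumes "s \<in> S" "alive s"
  shows "(\<lambda>x. \<integral>\<^sup>+\<omega>. partial_cost (step s x) \<omega> n \<partial>P) \<in> borel_measurable M"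
proof -
  have "partial_cost (step s x) \<omega> n = (\<Sum>j<n. stopped_cost step alive cost s (case_nat x \<omega>) (Suc j))"
    for x \<omega>
    using assms(2) by (simp add: stopped_cost_case_nat_Suc)
  then show ?thesis
    using measurable_stopped_cost[OF assms(1)]
    by (simp only:) (intro borel_measurable_nn_integral_PiM_case_nat prob_space_axioms; measurable)
qed

lemma nn_integral_partial_cost_Suc:
  assumes "s \<in> S" "alive s"
  shows "(\<integral>\<^sup>+\<omega>. partial_cost s \<omega> (Suc n) \<partial>P) =
    (\<integral>\<^sup>+x. cost s x \<partial>M) + (\<integral>\<^sup>+x. (\<integral>\<^sup>+\<omega>. partial_cost (step s x) \<omega> n \<partial>P) \<partial>M)"
proof -
  have [measurable]: "cost s \<in> borel_measurable M"
    using assms(1) by (rule measurable_cost)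
  note [measurable] = measurable_nn_integral_partial_cost_step[OF assms]
  have "(\<integral>\<^sup>+\<omega>. partial_cost s \<omega> (Suc n) \<partial>P) =
      (\<integral>\<^sup>+x. (\<integral>\<^sup>+\<omega>. partial_cost s (case_nat x \<omega>) (Suc n) \<partial>P) \<partial>M)"
    using assms(1) by (intro nn_integral_PiM_case_nat prob_space_axioms) measurable
  also have "\<dots> = (\<integral>\<^sup>+x. cost s x + (\<integral>\<^sup>+\<omega>. partial_cost (step s x) \<omega> n \<partial>P) \<partial>M)"
  proof (intro nn_integral_cong)
    fix x
    assume "x \<in> space M"
    then have [measurable]: "(\<lambda>\<omega>. partial_cost (step s x) \<omega> n) \<in> borel_measurable P"
      using assms(1) by (intro measurable_partial_cost step_closed)
    show "(\<integral>\<^sup>+\<omega>. partial_cost s (case_nat x \<omega>) (Suc n) \<partial>P) =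
        cost s x + (\<integral>\<^sup>+\<omega>. partial_cost (step s x) \<omega> n \<partial>P)"
      unfolding sum_stopped_cost_case_nat[where alive = alive, OF assms(2)]
      using prob_space.emeasure_space_1[OF prob_space_P] by (simp add: nn_integral_add)
  qed
  also have "\<dots> = (\<integral>\<^sup>+x. cost s x \<partial>M) + (\<integral>\<^sup>+x. (\<integral>\<^sup>+\<omega>. partial_cost (step s x) \<omega> n \<partial>P) \<partial>M)"
    by (intro nn_integral_add) measurable
  finally show ?thesis .
qed

lemma nn_integral_partial_cost_le:
  "s \<in> S \<Longrightarrow> (\<integral>\<^sup>+\<omega>. partial_cost s \<omega> n \<partial>P) + V s \<le> B"
proof (induction n arbitrary: s)
  case 0
  then show ?case by (simp add: potential_le)
next
  case (Suc n)
  show ?case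
  proof (cases "alive s")
    case False
    then show ?thesis
      using Suc.prems by (simp add: stopped_cost_not_alive potential_le)
  next
    case True
    define F where "F x = (\<integral>\<^sup>+\<omega>. partial_cost (step s x) \<omega> n \<partial>P)" for x
    have [measurable]: "F \<in> borel_measurable M" "(\<lambda>x. V (step s x)) \<in> borel_measurable M"
      unfolding F_def using Suc.prems True
      by (auto intro: measurable_nn_integral_partial_cost_step measurable_potential_step)
    have "(\<integral>\<^sup>+\<omega>. partial_cost s \<omega> (Suc n) \<partial>P) + V s = (\<integral>\<^sup>+x. F x \<partial>M) + ((\<integral>\<^sup>+x. cost s x \<partial>M) + V s)"
      unfolding F_def nn_integral_partial_cost_Suc[OF Suc.prems True] by (simp add: ac_simps)
    also have "\<dots> \<le> (\<integral>\<^sup>+x. F x \<partial>M) + (\<integral>\<^sup>+x. V (step s x) \<partial>M)"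
      using Suc.prems True by (intro add_left_mono drift)
    also have "\<dots> = (\<integral>\<^sup>+x. F x + V (step s x) \<partial>M)"
      by (intro nn_integral_add[symmetric]) measurable
    also have "\<dots> \<le> (\<integral>\<^sup>+x. B \<partial>M)"
      using Suc.IH Suc.prems step_closed unfolding F_def by (intro nn_integral_mono) blast
    also have "\<dots> = B"
      by (simp add: emeasure_space_1)
    finally show ?thesis .
  qed
qed

lemma nn_integral_stopped_cost_le:
  assumes "s \<in> S"
  shows "(\<integral>\<^sup>+\<omega>. (\<Sum>j. stopped_cost step alive cost s \<omega> j) \<partial>P) \<le> B"
proof -
  have "(\<integral>\<^sup>+\<omega>. (\<Sum>j. stopped_cost step alive cost s \<omega> j) \<partial>P) =
      (\<Sum>j. \<integral>\<^sup>+\<omega>. stopped_cost step alive cost s \<omega> j \<partial>P)"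
    using assms measurable_stopped_cost by (intro nn_integral_suminf) auto
  also have "\<dots> = (SUP n. \<integral>\<^sup>+\<omega>. partial_cost s \<omega> n \<partial>P)"
    using assms measurable_stopped_cost by (simp add: suminf_eq_SUP nn_integral_sum)
  also have "\<dots> \<le> B"
    by (intro SUP_least order_trans[OF add_increasing2[OF zero_le order_refl] nn_integral_partial_cost_le[OF assms]])
  finally show ?thesis .
qed

end

lemma nn_integral_pair_fst:
  assumes "prob_space N" and [measurable]: "h \<in> borel_measurable M"
  shows "(\<integral>\<^sup>+x. h (fst x) \<partial>(M \<Otimes>\<^sub>M N)) = (\<integral>\<^sup>+x. h x \<partial>M)"
proof -
  have "(\<integral>\<^sup>+x. h (fst x) \<partial>(M \<Otimes>\<^sub>M N)) = (\<integral>\<^sup>+x. h x \<partial>distr (M \<Otimes>\<^sub>M N) M fst)"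
    by (simp add: nn_integral_distr)
  then show ?thesis
    by (simp add: prob_space.distr_pair_fst[OF assms(1)])
qed

lemma nn_integral_pair_snd:
  assumes "prob_space M" "prob_space N" and [measurable]: "h \<in> borel_measurable N"
  shows "(\<integral>\<^sup>+x. h (snd x) \<partial>(M \<Otimes>\<^sub>M N)) = (\<integral>\<^sup>+y. h y \<partial>N)"
proof -
  have "(\<integral>\<^sup>+x. h (snd x) \<partial>(M \<Otimes>\<^sub>M N)) = (\<integral>\<^sup>+x. (\<integral>\<^sup>+y. h y \<partial>N) \<partial>M)"
    by (subst sigma_finite_measure.nn_integral_fst[symmetric])
      (auto intro: prob_space_imp_sigma_finite assms(2))
  then show ?thesis
    by (simp add: prob_space.emeasure_space_1[OF assms(1)])
qed

lemma AE_exponential_density_pos: "AE y in density lborel (exponential_density l). 0 < y"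
proof -
  have "AE y in lborel. 0 < exponential_density l y \<longrightarrow> 0 < y"
    using AE_lborel_singleton[of 0] by eventually_elim (auto simp: exponential_density_def)
  then show ?thesis
    by (subst AE_density) auto
qed

lemma nn_integral_exponential_mean:
  assumes "0 < l"
  shows "(\<integral>\<^sup>+y. ennreal y \<partial>density lborel (exponential_density l)) = ennreal (1 / l)"
proof -
  have "(\<integral>\<^sup>+y. ennreal y \<partial>density lborel (exponential_density l)) =
      (\<integral>\<^sup>+y. ennreal (erlang_density 0 l y * y ^ 1) \<partial>lborel)"
    using assms by (subst nn_integral_density)
      (auto intro!: nn_integral_cong simp: ennreal_mult[symmetric] exponential_density_def)
  also have "\<dots> = ennreal (1 / l)"
    using nn_integral_erlang_ith_moment[OF assms, of 0 1] by simp
  finally show ?thesis .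
qed

abbreviation uniform_01 :: "real measure" where
  "uniform_01 \<equiv> uniform_measure lborel {0<..<1}"

definition fb_input :: "(real \<times> real) measure" where
  "fb_input = uniform_01 \<Otimes>\<^sub>M density lborel (exponential_density 1)"

lemma fb_space_eq_PiM: "fb_space = PiM UNIV (\<lambda>_. fb_input)"
  unfolding fb_space_def fb_input_def ..

lemma prob_space_uniform_01: "prob_space uniform_01"
  by (intro prob_space_uniform_measure) auto

lemma emeasure_uniform_01_Ioo:
  assumes "0 \<le> p" "p \<le> q" "q \<le> 1"
  shows "emeasure uniform_01 {p<..<q} = ennreal (q - p)"
proof -
  have "{0<..<1} \<inter> {p<..<q} = {p<..<(q::real)}"
    using assms by auto
  then have "emeasure uniform_01 {p<..<q} = ennreal (q - p) / ennreal 1"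
    using assms by simp
  also have "\<dots> = ennreal (q - p)"
    using assms by (subst divide_ennreal) auto
  finally show ?thesis .
qed

lemma prob_space_fb_input: "prob_space fb_input"
  unfolding fb_input_def
  by (intro prob_space_pair prob_space_uniform_01 prob_space_exponential_density) simp

lemma prob_space_fb_space: "prob_space fb_space"
  unfolding fb_space_eq_PiM by (intro prob_space_PiM prob_space_fb_input)

lemma nn_integral_fb_input_fst:
  assumes "h \<in> borel_measurable borel"
  shows "(\<integral>\<^sup>+x. h (fst x) \<partial>fb_input) = (\<integral>\<^sup>+U. h U \<partial>uniform_01)"
  unfolding fb_input_def using assms
  by (intro nn_integral_pair_fst prob_space_exponential_density) auto

lemma nn_integral_fb_input_one_plus_snd: "(\<integral>\<^sup>+x. ennreal (1 + snd x) \<partial>fb_input) = 2"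
proof -
  let ?E = "density lborel (exponential_density (1::real))"
  have "(\<integral>\<^sup>+x. ennreal (1 + snd x) \<partial>fb_input) = (\<integral>\<^sup>+y. ennreal (1 + y) \<partial>?E)"
    unfolding fb_input_def
    by (intro nn_integral_pair_snd prob_space_uniform_01 prob_space_exponential_density) auto
  also have "\<dots> = (\<integral>\<^sup>+y. 1 + ennreal y \<partial>?E)"
  proof (rule nn_integral_cong_AE)
    show "AE y in ?E. ennreal (1 + y) = 1 + ennreal y"
      using AE_exponential_density_pos by eventually_elim (simp add: ennreal_plus)
  qed
  also have "\<dots> = 2"
  proof -
    have "emeasure ?E UNIV = 1"
      using prob_space.emeasure_space_1[OF prob_space_exponential_density[of 1]] by simp
    then show ?thesis
      by (simp add: nn_integral_add nn_integral_exponential_mean one_add_one)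
  qed
  finally show ?thesis .
qed

lemma AE_fb_space_snd_pos: "AE \<omega> in fb_space. \<forall>j. 0 < snd (\<omega> j)"
proof -
  interpret U: prob_space uniform_01
    by (rule prob_space_uniform_01)
  interpret E: prob_space "density lborel (exponential_density (1::real))"
    by (rule prob_space_exponential_density) simp
  interpret UE: pair_sigma_finite uniform_01
      "density lborel (exponential_density (1::real))"
    by unfold_locales
  interpret prob_space fb_input
    by (rule prob_space_fb_input)
  interpret sequence_space fb_input
    by unfold_locales
  have "{x \<in> space fb_input. 0 < snd x} \<in> sets fb_input"
    unfolding fb_input_def by measurable
  then have "AE x in fb_input. 0 < snd x"
    unfolding fb_input_def
    using UE.AE_pair_iff[of "\<lambda>_ y. 0 < y"] AE_exponential_density_pos by simp
  then show ?thesis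
    unfolding fb_space_eq_PiM by (subst AE_all_countable) (auto intro!: AE_component)
qed

section \<open>The jump chain and the drift of the mass\<close>

definition fb_ordered :: "nat \<Rightarrow> (nat \<Rightarrow> real) \<Rightarrow> bool" where
  "fb_ordered m z \<longleftrightarrow> z 1 = 1 \<and> (\<forall>i. 2 \<le> i \<and> i \<le> m - 1 \<longrightarrow> z i \<le> z (i - 1)) \<and> 0 \<le> z (m - 1)"

definition fb_mass :: "nat \<Rightarrow> (nat \<Rightarrow> real) \<Rightarrow> real" where
  "fb_mass m z = (\<Sum>i\<in>{2..m-1}. z i)"

lemma fb_rate_telescope: "2 \<le> m \<Longrightarrow> fb_rate m z = z 1 - z (m - 1)"
proof (induction m rule: dec_induct)
  case base
  then show ?case by (simp add: fb_rate_def)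
next
  case (step n)
  then have "{2..Suc n - 1} = insert n {2..n - 1}" by auto
  with step show ?case by (simp add: fb_rate_def)
qed

lemma fb_ordered_antimono:
  assumes z: "fb_ordered m z" and "1 \<le> i" "i \<le> j" "j \<le> m - 1"
  shows "z j \<le> z i"
  using assms(3-)
proof (induction j rule: dec_induct)
  case (step j)
  have "2 \<le> Suc j" "Suc j \<le> m - 1"
    using \<open>1 \<le> i\<close> step by auto
  then have "z (Suc j) \<le> z j"
    using z unfolding fb_ordered_def by (metis diff_Suc_1)
  with step show ?case by simp
qed simp

lemma fb_jump_ge: "z i \<le> fb_jump m z U i"
  by (auto simp: fb_jump_def Let_def)

lemma fb_jump_eq_target:
  assumes "2 \<le> i" "i \<le> m - 1" "z i < z (m - 1) + U * fb_rate m z" "z (m - 1) + U * fb_rate m z < z (i - 1)"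
  shows "fb_jump m z U i = z (m - 1) + U * fb_rate m z"
  using assms by (simp add: fb_jump_def Let_def)

lemma fb_ordered_jump:
  assumes z: "fb_ordered m z"
  shows "fb_ordered m (fb_jump m z U)"
proof -
  have "fb_jump m z U i \<le> fb_jump m z U (i - 1)" if "2 \<le> i" "i \<le> m - 1" for i
  proof -
    have "z i \<le> z (i - 1)"
      using z that by (simp add: fb_ordered_def)
    then show ?thesis
      using fb_jump_ge[of z "i - 1" m U] by (auto simp: fb_jump_def Let_def)
  qed
  moreover have "0 \<le> fb_jump m z U (m - 1)"
    using z fb_jump_ge[of z "m - 1" m U] by (simp add: fb_ordered_def)
  moreover have "fb_jump m z U 1 = 1"
    using z by (simp add: fb_ordered_def fb_jump_def Let_def)
  ultimately show ?thesis
    unfolding fb_ordered_def by simp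
qed

lemma fb_ordered_init: "2 \<le> m \<Longrightarrow> fb_ordered m (fb_init m)"
  by (auto simp: fb_ordered_def fb_init_def)

lemma fb_ordered_bounds:
  assumes "fb_ordered m z" "2 \<le> i" "i \<le> m - 1"
  shows "0 \<le> z i" "z i \<le> 1"
  using fb_ordered_antimono[OF assms(1), of i "m - 1"] fb_ordered_antimono[OF assms(1), of 1 i] assms
  by (auto simp: fb_ordered_def)

lemma fb_mass_bounds:
  assumes "2 \<le> m" "fb_ordered m z"
  shows "0 \<le> fb_mass m z" "fb_mass m z \<le> real m - 2"
proof -
  show "0 \<le> fb_mass m z"
    unfolding fb_mass_def using fb_ordered_bounds[OF assms(2)] by (auto intro: sum_nonneg)
  have "fb_mass m z \<le> (\<Sum>i\<in>{2..m-1}. 1)"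
    unfolding fb_mass_def by (intro sum_mono) (use fb_ordered_bounds[OF assms(2)] in auto)
  then show "fb_mass m z \<le> real m - 2"
    using assms(1) by (simp add: of_nat_diff)
qed

abbreviation fb_step :: "nat \<Rightarrow> (nat \<Rightarrow> real) \<Rightarrow> real \<times> real \<Rightarrow> nat \<Rightarrow> real" where
  "fb_step m z x \<equiv> fb_jump m z (fst x)"

lemma fb_chain_eq_trajectory: "fb_chain m \<omega> k = trajectory (fb_step m) (fb_init m) \<omega> k"
  by (induction k) auto

lemma fb_ordered_chain: "2 \<le> m \<Longrightarrow> fb_ordered m (fb_chain m \<omega> k)"
  by (induction k) (auto simp: fb_ordered_init fb_ordered_jump)

lemma measurable_fb_jump[measurable]:
  assumes [measurable]: "\<And>i. (\<lambda>\<omega>. z \<omega> i) \<in> borel_measurable N" "U \<in> borel_measurable N"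
  shows "(\<lambda>\<omega>. fb_jump m (z \<omega>) (U \<omega>) i) \<in> borel_measurable N"
  unfolding fb_jump_def Let_def fb_rate_def by measurable

lemma measurable_fb_trajectory[measurable]:
  "(\<lambda>\<omega>. trajectory (fb_step m) z \<omega> k i) \<in> borel_measurable (PiM UNIV (\<lambda>_. fb_input))"
proof (induction k arbitrary: i)
  case (Suc k)
  note [measurable] = Suc
  have [measurable]: "(\<lambda>\<omega>. fst (\<omega> k)) \<in> borel_measurable (PiM UNIV (\<lambda>_. fb_input))"
    unfolding fb_input_def by measurable
  show ?case
    unfolding trajectory.simps by measurable
qed simp

lemma nn_integral_fb_jump_increment_ge:
  assumes z: "fb_ordered m z" and i: "2 \<le> i" "i \<le> m - 1" and L: "0 < fb_rate m z"
  shows "ennreal ((z (i - 1) - z i)\<^sup>2 / (4 * fb_rate m z)) \<le>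
    (\<integral>\<^sup>+U. ennreal (fb_jump m z U i - z i) \<partial>uniform_01)"
proof -
  define L where "L = fb_rate m z"
  define g where "g = z (i - 1) - z i"
  \<comment> \<open>\<open>U \<in> {p<..<q}\<close> iff the target point \<open>z (m - 1) + U * L\<close> lies in the upper half of the gap\<close>
  define p where "p = ((z i + z (i - 1)) / 2 - z (m - 1)) / L"
  define q where "q = (z (i - 1) - z (m - 1)) / L"
  have L_eq: "L = 1 - z (m - 1)"
    using fb_rate_telescope[of m z] z i by (simp add: L_def fb_ordered_def)
  have "z (m - 1) \<le> z i" "z i \<le> z (i - 1)" "z (i - 1) \<le> 1"
    using fb_ordered_antimono[OF z, of i "m - 1"] fb_ordered_antimono[OF z, of "i - 1" i]
      fb_ordered_antimono[OF z, of 1 "i - 1"] i z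
    by (auto simp: fb_ordered_def)
  then have pq: "0 \<le> p" "p \<le> q" "q \<le> 1" "q - p = g / (2 * L)"
    using L L_eq unfolding p_def q_def g_def L_def[symmetric]
    by (auto simp: field_simps)
  have gain: "ennreal (g / 2) * indicator {p<..<q} U \<le> ennreal (fb_jump m z U i - z i)" for U
  proof (cases "U \<in> {p<..<q}")
    case True
    define u where "u = z (m - 1) + U * L"
    have "(z i + z (i - 1)) / 2 < u" "u < z (i - 1)"
      using True L unfolding p_def q_def u_def L_def[symmetric] by (auto simp: field_simps)
    then have "fb_jump m z U i = u"
      using i \<open>z i \<le> z (i - 1)\<close> unfolding u_def L_def by (intro fb_jump_eq_target) auto
    then show ?thesis
      using True \<open>(z i + z (i - 1)) / 2 < u\<close> by (simp add: g_def ennreal_leI)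
  qed simp
  have "ennreal (g\<^sup>2 / (4 * L)) = ennreal (g / 2) * ennreal (g / (2 * L))"
    using L \<open>z i \<le> z (i - 1)\<close> unfolding L_def[symmetric]
    by (simp add: ennreal_mult[symmetric] g_def power2_eq_square)
  also have "\<dots> = ennreal (g / 2) * emeasure uniform_01 {p<..<q}"
    using emeasure_uniform_01_Ioo[OF pq(1-3)] unfolding pq(4) by simp
  also have "\<dots> = (\<integral>\<^sup>+U. ennreal (g / 2) * indicator {p<..<q} U \<partial>uniform_01)"
    by (simp add: nn_integral_cmult_indicator)
  also have "\<dots> \<le> (\<integral>\<^sup>+U. ennreal (fb_jump m z U i - z i) \<partial>uniform_01)"
    by (intro nn_integral_mono gain)
  finally show ?thesis
    unfolding g_def L_def .
qed

lemma nn_integral_fb_mass_jump_ge: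
  assumes m: "3 \<le> m" and z: "fb_ordered m z" and L: "0 < fb_rate m z"
  shows "ennreal (fb_mass m z + fb_rate m z / (4 * (real m - 2))) \<le>
    (\<integral>\<^sup>+U. ennreal (fb_mass m (fb_jump m z U)) \<partial>uniform_01)"
proof -
  define A where "A = {2..m-1}"
  define L where "L = fb_rate m z"
  define g where "g i = z (i - 1) - z i" for i
  have "L\<^sup>2 \<le> (\<Sum>i\<in>A. (g i)\<^sup>2) * (real m - 2)"
    using sum_squared_le_sum_of_squares[of g A] m
    by (simp add: A_def g_def L_def fb_rate_def of_nat_diff)
  then have "L / (4 * (real m - 2)) \<le> (\<Sum>i\<in>A. (g i)\<^sup>2 / (4 * L))"
    using L m unfolding L_def[symmetric] sum_divide_distrib[symmetric]
    by (simp add: field_simps power2_eq_square)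
  then have "ennreal (fb_mass m z + L / (4 * (real m - 2))) \<le>
      ennreal (fb_mass m z) + (\<Sum>i\<in>A. ennreal ((g i)\<^sup>2 / (4 * L)))"
    using L m fb_mass_bounds[OF _ z]
    by (simp add: L_def ennreal_plus[symmetric] ennreal_leI sum_nonneg del: ennreal_plus)
  also have "\<dots> \<le> ennreal (fb_mass m z) + (\<Sum>i\<in>A. \<integral>\<^sup>+U. ennreal (fb_jump m z U i - z i) \<partial>uniform_01)"
    using nn_integral_fb_jump_increment_ge[OF z _ _ L]
    unfolding A_def g_def L_def by (intro add_left_mono sum_mono) auto
  also have "\<dots> = (\<integral>\<^sup>+U. ennreal (fb_mass m z) + (\<Sum>i\<in>A. ennreal (fb_jump m z U i - z i)) \<partial>uniform_01)"
    using prob_space.emeasure_space_1[OF prob_space_uniform_01]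
    by (simp add: nn_integral_add nn_integral_sum)
  also have "\<dots> = (\<integral>\<^sup>+U. ennreal (fb_mass m (fb_jump m z U)) \<partial>uniform_01)"
  proof (intro nn_integral_cong)
    fix U
    have "fb_mass m (fb_jump m z U) = fb_mass m z + (\<Sum>i\<in>A. fb_jump m z U i - z i)"
      unfolding fb_mass_def A_def by (simp add: sum_subtractf)
    then show "ennreal (fb_mass m z) + (\<Sum>i\<in>A. ennreal (fb_jump m z U i - z i)) =
        ennreal (fb_mass m (fb_jump m z U))"
      using fb_mass_bounds[OF _ z] m sum_nonneg[of A "\<lambda>i. fb_jump m z U i - z i"] fb_jump_ge[of z _ m U]
      by simp
  qed
  finally show ?thesis
    unfolding L_def .
qed

definition fb_alive :: "nat \<Rightarrow> (nat \<Rightarrow> real) \<Rightarrow> bool" where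
  "fb_alive m z \<longleftrightarrow> z (m - 1) < 1 / (2 * exp 1)"

lemma fb_alive_lt_half: "fb_alive m z \<Longrightarrow> z (m - 1) < 1 / 2"
proof -
  have "1 / (2 * exp 1) < (1 / 2 :: real)"
    using exp_gt_one[of 1] by (simp add: field_simps)
  then show "fb_alive m z \<Longrightarrow> z (m - 1) < 1 / 2"
    unfolding fb_alive_def by linarith
qed

lemma fb_alive_rate_gt_half: "2 \<le> m \<Longrightarrow> fb_ordered m z \<Longrightarrow> fb_alive m z \<Longrightarrow> 1 / 2 < fb_rate m z"
  using fb_alive_lt_half[of m z] by (simp add: fb_rate_telescope fb_ordered_def)

lemma fb_alive_three_le: "2 \<le> m \<Longrightarrow> fb_ordered m z \<Longrightarrow> fb_alive m z \<Longrightarrow> 3 \<le> m"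
  using fb_alive_lt_half[of m z] by (cases "m = 2") (auto simp: fb_ordered_def)

lemma nn_integral_fb_potential_step_ge:
  assumes m: "2 \<le> m" and z: "fb_ordered m z" and alive: "fb_alive m z"
  defines "K \<equiv> 16 * (real m - 2)"
  shows "(\<integral>\<^sup>+x. ennreal (1 + snd x) \<partial>fb_input) + ennreal (K * fb_mass m z) \<le>
    (\<integral>\<^sup>+x. ennreal (K * fb_mass m (fb_step m z x)) \<partial>fb_input)"
proof -
  have m3: "3 \<le> m" and L: "1 / 2 < fb_rate m z"
    using fb_alive_three_le[OF m z alive] fb_alive_rate_gt_half[OF m z alive] .
  have K: "0 \<le> K"
    using m by (simp add: K_def)
  have "K * (fb_mass m z + 1 / (8 * (real m - 2))) = 2 + K * fb_mass m z"
    using m3 by (simp add: K_def field_simps)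
  moreover have "0 \<le> K * fb_mass m z"
    using K fb_mass_bounds[OF m z] by simp
  ultimately have "(\<integral>\<^sup>+x. ennreal (1 + snd x) \<partial>fb_input) + ennreal (K * fb_mass m z) =
      ennreal (K * (fb_mass m z + 1 / (8 * (real m - 2))))"
    by (simp add: nn_integral_fb_input_one_plus_snd)
  also have "\<dots> \<le> ennreal (K * (fb_mass m z + fb_rate m z / (4 * (real m - 2))))"
  proof (intro ennreal_leI mult_left_mono add_left_mono K)
    have "1 / (8 * (real m - 2)) = (1 / 2) / (4 * (real m - 2))"
      by simp
    also have "\<dots> \<le> fb_rate m z / (4 * (real m - 2))"
      using m3 L by (intro divide_right_mono) auto
    finally show "1 / (8 * (real m - 2)) \<le> fb_rate m z / (4 * (real m - 2))" .
  qed
  also have "\<dots> = ennreal K * ennreal (fb_mass m z + fb_rate m z / (4 * (real m - 2)))"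
    by (rule ennreal_mult'[OF K])
  also have "\<dots> \<le> ennreal K * (\<integral>\<^sup>+U. ennreal (fb_mass m (fb_jump m z U)) \<partial>uniform_01)"
    using L by (intro mult_left_mono nn_integral_fb_mass_jump_ge m3 z) auto
  also have "\<dots> = (\<integral>\<^sup>+U. ennreal (K * fb_mass m (fb_jump m z U)) \<partial>uniform_01)"
    using K by (simp add: nn_integral_cmult[symmetric] ennreal_mult' fb_mass_def)
  also have "\<dots> = (\<integral>\<^sup>+x. ennreal (K * fb_mass m (fb_step m z x)) \<partial>fb_input)"
    by (intro nn_integral_fb_input_fst[symmetric]) (simp add: fb_mass_def)
  finally show ?thesis .
qed

lemma potential_drift_fb:
  assumes m: "2 \<le> m"
  shows "potential_drift fb_input (fb_step m) {z. fb_ordered m z} (fb_alive m)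
    (\<lambda>_ x. ennreal (1 + snd x)) (\<lambda>z. ennreal (16 * (real m - 2) * fb_mass m z))
    (ennreal (16 * (real m - 2)\<^sup>2))"
proof (intro potential_drift.intro potential_drift_axioms.intro prob_space_fb_input)
  show "ennreal (16 * (real m - 2) * fb_mass m z) \<le> ennreal (16 * (real m - 2)\<^sup>2)"
    if "z \<in> {z. fb_ordered m z}" for z
  proof (intro ennreal_leI)
    have "16 * (real m - 2) * fb_mass m z \<le> 16 * (real m - 2) * (real m - 2)"
      using fb_mass_bounds[OF m] that m by (intro mult_left_mono) auto
    then show "16 * (real m - 2) * fb_mass m z \<le> 16 * (real m - 2)\<^sup>2"
      by (simp add: power2_eq_square algebra_simps)
  qed
  show "(\<lambda>\<omega>. stopped_cost (fb_step m) (fb_alive m) (\<lambda>_ x. ennreal (1 + snd x)) z \<omega> j)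
      \<in> borel_measurable (PiM UNIV (\<lambda>_. fb_input))" for z j
  proof -
    have [measurable]: "(\<lambda>\<omega>. snd (\<omega> j)) \<in> borel_measurable (PiM UNIV (\<lambda>_. fb_input))"
      unfolding fb_input_def by measurable
    show ?thesis
      unfolding stopped_cost_def fb_alive_def by measurable
  qed
  show "(\<integral>\<^sup>+x. ennreal (1 + snd x) \<partial>fb_input) + ennreal (16 * (real m - 2) * fb_mass m z) \<le>
      (\<integral>\<^sup>+x. ennreal (16 * (real m - 2) * fb_mass m (fb_step m z x)) \<partial>fb_input)"
    if "z \<in> {z. fb_ordered m z}" "fb_alive m z" for z
    using nn_integral_fb_potential_step_ge[OF m, of z] that by simp
  show "(\<lambda>x. ennreal (16 * (real m - 2) * fb_mass m (fb_step m z x))) \<in> borel_measurable fb_input"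
    for z
    unfolding fb_input_def fb_mass_def by measurable
  show "(\<lambda>x. ennreal (1 + snd x)) \<in> borel_measurable fb_input"
    unfolding fb_input_def by measurable
qed (auto simp: fb_ordered_jump)

section \<open>From the jump chain to \<open>\<beta>\<close>\<close>

lemma fb_jumptime_mono: "k \<le> k' \<Longrightarrow> fb_jumptime m \<omega> k \<le> fb_jumptime m \<omega> k'"
  unfolding fb_jumptime_def by (intro sum_mono2) auto

lemma fb_Z_eq_chain:
  assumes "fb_jumptime m \<omega> N \<le> ennreal t" "ennreal t < fb_jumptime m \<omega> (Suc N)"
  shows "fb_Z m \<omega> t = fb_chain m \<omega> N"
proof -
  have "fb_jumptime m \<omega> k \<le> ennreal t \<longleftrightarrow> k \<le> N" for k
  proof
    assume k: "fb_jumptime m \<omega> k \<le> ennreal t"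
    show "k \<le> N"
    proof (rule ccontr)
      assume "\<not> k \<le> N"
      then have "fb_jumptime m \<omega> (Suc N) \<le> fb_jumptime m \<omega> k"
        by (intro fb_jumptime_mono) simp
      also note k
      finally show False
        using assms(2) by simp
    qed
  next
    assume "k \<le> N"
    then show "fb_jumptime m \<omega> k \<le> ennreal t"
      using assms(1) by (rule order_trans[OF fb_jumptime_mono])
  qed
  then have "{k. 1 \<le> k \<and> fb_jumptime m \<omega> k \<le> ennreal t} = {1..N}"
    by (simp add: set_eq_iff)
  then show ?thesis
    by (simp add: fb_Z_def)
qed

lemma fb_beta_le_jumptime:
  assumes dead: "1 / (2 * exp 1) \<le> fb_chain m \<omega> N (m - 1)"
    and J: "fb_jumptime m \<omega> N < \<infinity>" and h: "0 < fb_hold m \<omega> N"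
  shows "fb_beta m \<omega> \<le> fb_jumptime m \<omega> N + 1"
proof -
  let ?J = "fb_jumptime m \<omega> N"
  have "fb_jumptime m \<omega> (Suc N) = ?J + fb_hold m \<omega> N"
    by (simp add: fb_jumptime_def)
  then have "?J < min (fb_jumptime m \<omega> (Suc N)) (?J + 1)"
    using J h by (simp add: ennreal_add_left_cancel_less)
  then obtain y where y: "?J < y" "y < min (fb_jumptime m \<omega> (Suc N)) (?J + 1)"
    using dense by blast
  have y_lt: "y < ?J + 1"
    using y(2) by simp
  also have "\<dots> < \<infinity>"
    using J by simp
  finally have "y < \<infinity>" .
  then obtain t where t: "y = ennreal t" "0 \<le> t"
    by (cases y) auto
  have "0 < y"
    using y(1) by (rule le_less_trans[OF zero_le])
  with t have "0 < t"
    by simp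
  moreover have "fb_Z m \<omega> t = fb_chain m \<omega> N"
    using y t by (intro fb_Z_eq_chain) auto
  ultimately have "ennreal t \<in> {ennreal t | t. 0 < t \<and> 1 / (2 * exp 1) \<le> fb_Z m \<omega> t (m - 1)}"
    using dead by auto
  then have "fb_beta m \<omega> \<le> ennreal t"
    unfolding fb_beta_def by (rule Inf_lower)
  also have "\<dots> \<le> ?J + 1"
    using y_lt t by simp
  finally show ?thesis .
qed

lemma fb_hold_pos: "0 < snd (\<omega> k) \<Longrightarrow> 0 < fb_hold m \<omega> k"
  unfolding fb_hold_def Let_def by (auto intro: divide_pos_pos)

lemma fb_hold_le_cost:
  assumes m: "2 \<le> m" and E: "0 \<le> snd (\<omega> k)" and alive: "fb_alive m (fb_chain m \<omega> k)"
  shows "fb_hold m \<omega> k \<le> 2 * ennreal (1 + snd (\<omega> k))"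
proof -
  define r where "r = fb_rate m (fb_chain m \<omega> k)"
  have r: "1 / 2 < r"
    unfolding r_def using fb_alive_rate_gt_half[OF m fb_ordered_chain[OF m] alive] .
  have "fb_hold m \<omega> k = ennreal (snd (\<omega> k) / r)"
    unfolding fb_hold_def Let_def r_def[symmetric] using r by simp
  also have "\<dots> \<le> ennreal (2 * (1 + snd (\<omega> k)))"
  proof (intro ennreal_leI)
    have "snd (\<omega> k) / r \<le> snd (\<omega> k) / (1 / 2)"
      using E r by (intro divide_left_mono) auto
    then show "snd (\<omega> k) / r \<le> 2 * (1 + snd (\<omega> k))"
      by simp
  qed
  also have "\<dots> = 2 * ennreal (1 + snd (\<omega> k))"
    using E by (simp add: ennreal_mult)
  finally show ?thesis .
qed

text \<open>The summand 1 in the cost makes the cost series diverge when the level is never reached,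
  which disposes of that case without any non-explosion argument.\<close>

abbreviation fb_stopped_cost :: "nat \<Rightarrow> (nat \<Rightarrow> real \<times> real) \<Rightarrow> nat \<Rightarrow> ennreal" where
  "fb_stopped_cost m \<equiv> stopped_cost (fb_step m) (fb_alive m) (\<lambda>_ x. ennreal (1 + snd x)) (fb_init m)"

lemma fb_beta_le_stopped_cost:
  assumes m: "2 \<le> m" and pos: "\<And>j. 0 < snd (\<omega> j)"
  shows "fb_beta m \<omega> \<le> 2 * (\<Sum>j. fb_stopped_cost m \<omega> j) + 1"
proof (cases "\<forall>j. fb_alive m (fb_chain m \<omega> j)")
  case True
  then have "ennreal 1 \<le> fb_stopped_cost m \<omega> j" for j
    using pos[of j] by (simp add: stopped_cost_def fb_chain_eq_trajectory ennreal_leI)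
  then have "(\<Sum>j. ennreal 1) \<le> (\<Sum>j. fb_stopped_cost m \<omega> j)"
    by (intro suminf_le summableI)
  moreover have "(\<Sum>j. ennreal 1) = \<infinity>"
    using summable_iff_suminf_neq_top[of "\<lambda>_. 1"] by (simp add: summable_const_iff)
  ultimately show ?thesis
    by (simp add: top_unique)
next
  case False
  define N where "N = (LEAST j. \<not> fb_alive m (fb_chain m \<omega> j))"
  have dead: "\<not> fb_alive m (fb_chain m \<omega> N)"
    unfolding N_def using False by (metis LeastI)
  have alive: "fb_alive m (fb_chain m \<omega> j)" if "j < N" for j
    using not_less_Least[of j] that unfolding N_def by blast
  have hold_le: "fb_hold m \<omega> j \<le> 2 * fb_stopped_cost m \<omega> j" if "j < N" for j
    using fb_hold_le_cost[OF m less_imp_le[OF pos[of j]] alive[OF that]] alive that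
    by (simp add: stopped_cost_def fb_chain_eq_trajectory)
  have "fb_jumptime m \<omega> N \<le> 2 * (\<Sum>j<N. fb_stopped_cost m \<omega> j)"
    unfolding fb_jumptime_def sum_distrib_left by (intro sum_mono hold_le) simp
  moreover have "(\<Sum>j<N. fb_stopped_cost m \<omega> j) < \<infinity>"
    by (simp add: stopped_cost_def less_top[symmetric])
  ultimately have J_fin: "fb_jumptime m \<omega> N < \<infinity>"
    by (simp add: ennreal_mult_less_top le_less_trans)
  have "fb_beta m \<omega> \<le> fb_jumptime m \<omega> N + 1"
    using dead J_fin fb_hold_pos[OF pos] unfolding fb_alive_def
    by (intro fb_beta_le_jumptime) auto
  also have "\<dots> \<le> 2 * (\<Sum>j<N. fb_stopped_cost m \<omega> j) + 1"
    by (intro add_right_mono) fact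
  also have "\<dots> \<le> 2 * (\<Sum>j. fb_stopped_cost m \<omega> j) + 1"
    by (intro add_right_mono mult_left_mono sum_le_suminf) auto
  finally show ?thesis .
qed

lemma nn_integral_fb_beta_le:
  assumes m: "2 \<le> m"
  shows "(\<integral>\<^sup>+\<omega>. fb_beta m \<omega> \<partial>fb_space) \<le> ennreal (32 * (real m - 2)\<^sup>2 + 1)"
proof -
  interpret potential_drift fb_input "fb_step m" "{z. fb_ordered m z}" "fb_alive m"
    "\<lambda>_ x. ennreal (1 + snd x)" "\<lambda>z. ennreal (16 * (real m - 2) * fb_mass m z)"
    "ennreal (16 * (real m - 2)\<^sup>2)"
    by (rule potential_drift_fb[OF m])
  have init: "fb_init m \<in> {z. fb_ordered m z}"
    using fb_ordered_init[OF m] by simp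
  let ?C = "\<lambda>\<omega>. \<Sum>j. fb_stopped_cost m \<omega> j"
  have [measurable]: "?C \<in> borel_measurable fb_space"
    unfolding fb_space_eq_PiM using measurable_stopped_cost[OF init] by measurable
  have "(\<integral>\<^sup>+\<omega>. fb_beta m \<omega> \<partial>fb_space) \<le> (\<integral>\<^sup>+\<omega>. 2 * ?C \<omega> + 1 \<partial>fb_space)"
    using AE_fb_space_snd_pos
    by (intro nn_integral_mono_AE) (auto elim!: eventually_mono intro: fb_beta_le_stopped_cost[OF m])
  also have "\<dots> = 2 * (\<integral>\<^sup>+\<omega>. ?C \<omega> \<partial>fb_space) + 1"
    using prob_space.emeasure_space_1[OF prob_space_fb_space] by (simp add: nn_integral_add nn_integral_cmult)
  also have "\<dots> \<le> 2 * ennreal (16 * (real m - 2)\<^sup>2) + 1"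
    unfolding fb_space_eq_PiM by (intro add_right_mono mult_left_mono nn_integral_stopped_cost_le init) simp
  also have "\<dots> = ennreal (32 * (real m - 2)\<^sup>2 + 1)"
    by (simp add: ennreal_plus ennreal_mult)
  finally show ?thesis .
qed

theorem lemma6p1:
  shows "\<exists>c::real. 0 < c \<and> (\<forall>m::nat. 1 < m \<longrightarrow>
           (\<integral>\<^sup>+ \<omega>. fb_beta m \<omega> \<partial>fb_space) \<le> ennreal (c * real m ^ 2))"
proof (intro exI[of _ 33] conjI allI impI)
  fix m :: nat
  assume "1 < m"
  then have m: "2 \<le> m" by simp
  have "(\<integral>\<^sup>+\<omega>. fb_beta m \<omega> \<partial>fb_space) \<le> ennreal (32 * (real m - 2)\<^sup>2 + 1)"
    by (rule nn_integral_fb_beta_le[OF m])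
  also have "\<dots> \<le> ennreal (33 * real m ^ 2)"
  proof (intro ennreal_leI)
    have "(real m - 2)\<^sup>2 \<le> real m ^ 2" "1 \<le> real m ^ 2"
      using m by (auto intro: power_mono)
    then show "32 * (real m - 2)\<^sup>2 + 1 \<le> 33 * real m ^ 2"
      by linarith
  qed
  finally show "(\<integral>\<^sup>+\<omega>. fb_beta m \<omega> \<partial>fb_space) \<le> ennreal (33 * real m ^ 2)" .
qed simp

end
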